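(* Let $\Delta$ be a compact Hausdorff space, $u\colon\Delta\to\mathbb R$ continuous, $v\colon\Delta\to\mathbb R$ upper semicontinuous, $f(\alpha)=\max\{v(\bm w):u(\bm w)=\alpha\}$ (with $\max\varnothing=-\infty$), $\tau(q)=\min_{\bm w\in\Delta}\{q\,u(\bm w)-v(\bm w)\}$, and $M(q)=\{\bm w\in\Delta: q\,u(\bm w)-v(\bm w)=\tau(q)\}$. If $q\in\mathbb R$ is such that $M(q)$ is connected, then $f(\alpha)=\tau^*(\alpha)$ for all $\alpha\in\partial\tau(q)$. If moreover $M(q)$ is a singleton, then $\tau$ is differentiable at $q$.
   Context: Concave conjugate: $\tau^*(\alpha)=\inf_{q\in\mathbb R}(q\alpha-\tau(q))$. For the concave function $\tau$, $\partial\tau(q)=\{\alpha:\alpha(y-q)+\tau(q)\ge\tau(y)\ \forall y\}=[\partial^+\tau(q),\partial^-\tau(q)]$ (right and left derivatives). *)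

theory Defs
  imports "HOL-Analysis.Analysis"
begin

definition usc_on :: "'a::topological_space set \<Rightarrow> ('a \<Rightarrow> real) \<Rightarrow> bool" where
  "usc_on D v \<longleftrightarrow> (\<forall>a. openin (top_of_set D) {x \<in> D. v x < a})"

text \<open>Concave conjugate, valued in extended reals (the infimum may be -infinity).\<close>
definition concave_conj :: "(real \<Rightarrow> real) \<Rightarrow> real \<Rightarrow> ereal" where
  "concave_conj \<tau> \<alpha> = (INF q. ereal (q * \<alpha> - \<tau> q))"

definition superdiff :: "(real \<Rightarrow> real) \<Rightarrow> real \<Rightarrow> real set" where
  "superdiff \<tau> q = {\<alpha>. \<forall>y. \<alpha> * (y - q) + \<tau> q \<ge> \<tau> y}"

end

theory Submission
  imports Defs
begin

text \<open>Every minimizer \<open>w\<close> of \<open>q u - v\<close> gives the supporting line \<open>y \<mapsto> \<tau> q + (y - q) u w\<close> of the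
  concave function \<open>\<tau>\<close>. Minimizers of \<open>y u - v\<close> for \<open>y\<close> near \<open>q\<close> have \<open>u\<close>-values close to the
  \<open>u\<close>-values of the minimizers at \<open>q\<close> (a compactness argument, using the upper semicontinuity of \<open>v\<close>),
  so a superderivative \<open>\<alpha>\<close> at \<open>q\<close> lies between two values \<open>u w\<close> with \<open>w \<in> M q\<close>; connectedness of \<open>M q\<close>
  then yields \<open>w \<in> M q\<close> with \<open>u w = \<alpha>\<close>, for which \<open>v w = q \<alpha> - \<tau> q\<close> attains the bound
  \<open>f \<le> \<tau>\<^sup>*\<close> of the Fenchel--Young inequality. If \<open>M q = {w}\<close>, the same closeness squeezes the difference
  quotients of \<open>\<tau>\<close> at \<open>q\<close> to \<open>u w\<close>.\<close>

lemma usc_on_add_continuous: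
  assumes "usc_on D v" "continuous_on D c"
  shows "usc_on D (\<lambda>x. v x + c x)"
  unfolding usc_on_def
proof
  fix a
  have eq: "{x \<in> D. v x + c x < a} = (\<Union>r. {x \<in> D. v x < r} \<inter> (D \<inter> c -` {..<a - r}))"
  proof (rule set_eqI, rule iffI)
    fix x assume x: "x \<in> {x \<in> D. v x + c x < a}"
    let ?r = "(v x + a - c x) / 2"
    have "v x < ?r" "c x < a - ?r" using x by (auto simp: field_simps)
    with x show "x \<in> (\<Union>r. {x \<in> D. v x < r} \<inter> (D \<inter> c -` {..<a - r}))" by blast
  qed auto
  have "\<And>r. openin (top_of_set D) ({x \<in> D. v x < r} \<inter> (D \<inter> c -` {..<a - r}))"
    using assms unfolding usc_on_def
    by (intro openin_Int continuous_openin_preimage_gen) auto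
  then show "openin (top_of_set D) {x \<in> D. v x + c x < a}"
    unfolding eq by (intro openin_Union) auto
qed

lemma usc_on_attains_max:
  assumes "usc_on D h" "S \<subseteq> D" "compact S" "S \<noteq> {}"
  shows "\<exists>x\<in>S. \<forall>y\<in>S. h y \<le> h x"
proof (rule ccontr)
  assume no_max: "\<not> ?thesis"
  have "\<forall>w. \<exists>T. open T \<and> {x\<in>D. h x < h w} = D \<inter> T"
    using assms(1) unfolding usc_on_def openin_open by blast
  then obtain T where T: "\<And>w. open (T w)" "\<And>w. {x\<in>D. h x < h w} = D \<inter> T w"
    by metis
  have "S \<subseteq> \<Union>(T ` S)"
  proof
    fix x assume "x \<in> S"
    moreover obtain y where "y \<in> S" "h x < h y" using no_max \<open>x \<in> S\<close> by (meson not_le)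
    ultimately show "x \<in> \<Union>(T ` S)" using T(2)[of y] assms(2) by blast
  qed
  then obtain F where F: "F \<subseteq> S" "finite F" "S \<subseteq> \<Union>(T ` F)"
    using compactE_image[OF assms(3)] T(1) by metis
  with assms(4) have "F \<noteq> {}" by auto
  with F(2) have "Max (h ` F) \<in> h ` F" by simp
  then obtain w0 where w0: "w0 \<in> F" "h w0 = Max (h ` F)" by auto
  then obtain w where w: "w \<in> F" "w0 \<in> T w" using F by blast
  then have "h w0 < h w" using T(2)[of w] w0 F(1) assms(2) by blast
  moreover have "h w \<le> Max (h ` F)" using w F(2) by simp
  ultimately show False using w0 by simp
qed

locale lower_envelope =
  fixes D :: "'a::topological_space set" and u v :: "'a \<Rightarrow> real" and \<tau> :: "real \<Rightarrow> real"
  assumes compact: "compact D" and nonempty: "D \<noteq> {}"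
    and continuous_u: "continuous_on D u" and usc_v: "usc_on D v"
    and tau_eq: "\<And>q. \<tau> q = Inf {q * u w - v w | w. w \<in> D}"
begin

definition minimizers :: "real \<Rightarrow> 'a set" where
  "minimizers q = {w \<in> D. q * u w - v w = \<tau> q}"

lemma attains_min:
  assumes "S \<subseteq> D" "compact S" "S \<noteq> {}"
  shows "\<exists>x\<in>S. \<forall>y\<in>S. p * u x - v x \<le> p * u y - v y"
proof -
  have "continuous_on D (\<lambda>x. - p * u x)" using continuous_u by (intro continuous_intros)
  then have "usc_on D (\<lambda>x. v x + - p * u x)" using usc_on_add_continuous usc_v by blast
  from usc_on_attains_max[OF this assms] show ?thesis by (auto simp: algebra_simps)
qed

lemma tau_attained: "\<exists>x\<in>D. \<tau> p = p * u x - v x \<and> (\<forall>y\<in>D. \<tau> p \<le> p * u y - v y)"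
proof -
  obtain x where x: "x \<in> D" "\<forall>y\<in>D. p * u x - v x \<le> p * u y - v y"
    using attains_min[OF order_refl compact nonempty] by blast
  have "\<tau> p = p * u x - v x" unfolding tau_eq
    by (rule cInf_eq_minimum) (use x in auto)
  with x show ?thesis by auto
qed

lemma tau_le: "w \<in> D \<Longrightarrow> \<tau> p \<le> p * u w - v w"
  using tau_attained by force

lemma minimizers_nonempty: "minimizers p \<noteq> {}"
proof -
  obtain x where "x \<in> D" "\<tau> p = p * u x - v x" using tau_attained by blast
  then show ?thesis unfolding minimizers_def by auto
qed

lemma tau_le_tangent:
  assumes "w \<in> minimizers q"
  shows "\<tau> y \<le> \<tau> q + (y - q) * u w"
  using assms tau_le[of w y] unfolding minimizers_def by (auto simp: algebra_simps)

lemma minimizers_gap: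
  assumes K: "K \<subseteq> D" "compact K" "K \<inter> minimizers q = {}"
  shows "\<exists>d>0. \<forall>y. \<bar>y - q\<bar> < d \<longrightarrow> (\<forall>w\<in>K. \<tau> q + (y - q) * \<beta> < y * u w - v w)"
proof (cases "K = {}")
  case True then show ?thesis by (intro exI[of _ 1]) auto
next
  case False
  then obtain k where k: "k \<in> K" "\<forall>w\<in>K. q * u k - v k \<le> q * u w - v w"
    using attains_min[OF K(1,2)] by blast
  define m where "m = q * u k - v k"
  have "m > \<tau> q"
    using tau_le[of k q] k K unfolding m_def minimizers_def by force
  obtain C where C: "C > 0" "\<And>w. w \<in> D \<Longrightarrow> \<bar>u w\<bar> \<le> C"
    using compact_imp_bounded[OF compact_continuous_image[OF continuous_u compact]] bounded_pos
    by (metis image_eqI real_norm_def)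
  define d where "d = (m - \<tau> q) / (C + \<bar>\<beta>\<bar>)"
  have "C + \<bar>\<beta>\<bar> > 0" using C by linarith
  then have "d > 0" using \<open>m > \<tau> q\<close> d_def by simp
  moreover have "\<tau> q + (y - q) * \<beta> < y * u w - v w" if "\<bar>y - q\<bar> < d" "w \<in> K" for y w
  proof -
    have "\<bar>y - q\<bar> * C + \<bar>y - q\<bar> * \<bar>\<beta>\<bar> < m - \<tau> q"
      using that \<open>C + \<bar>\<beta>\<bar> > 0\<close> unfolding d_def by (simp add: pos_less_divide_eq distrib_left)
    moreover have "\<bar>u w\<bar> \<le> C" using C(2) that(2) K(1) by blast
    then have "- (\<bar>y - q\<bar> * C) \<le> (y - q) * u w"
      by (metis abs_le_D2 abs_mult abs_ge_zero mult_left_mono minus_le_iff)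
    moreover have "(y - q) * \<beta> \<le> \<bar>y - q\<bar> * \<bar>\<beta>\<bar>" by (metis abs_ge_self abs_mult)
    moreover have "m \<le> q * u w - v w" using k that m_def by auto
    moreover have "y * u w - v w = (q * u w - v w) + (y - q) * u w" by (simp add: algebra_simps)
    ultimately show ?thesis by linarith
  qed
  ultimately show ?thesis by blast
qed

lemma minimizers_avoid_closed:
  assumes "closed S" "u ` minimizers q \<inter> S = {}"
  shows "\<exists>d>0. \<forall>y w. \<bar>y - q\<bar> < d \<longrightarrow> w \<in> minimizers y \<longrightarrow> u w \<notin> S"
proof -
  define K where "K = D \<inter> u -` S"
  have "closedin (top_of_set D) K"
    unfolding K_def using continuous_closedin_preimage[OF continuous_u assms(1)] .
  then have "compact K" using closedin_compact compact by blast
  moreover have "K \<subseteq> D" "K \<inter> minimizers q = {}"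
    using assms(2) unfolding K_def minimizers_def by auto
  moreover obtain w0 where w0: "w0 \<in> minimizers q" using minimizers_nonempty by blast
  ultimately obtain d where d: "d > 0"
    "\<forall>y. \<bar>y - q\<bar> < d \<longrightarrow> (\<forall>w\<in>K. \<tau> q + (y - q) * u w0 < y * u w - v w)"
    using minimizers_gap by blast
  have "\<forall>y w. \<bar>y - q\<bar> < d \<longrightarrow> w \<in> minimizers y \<longrightarrow> u w \<notin> S"
  proof (intro allI impI notI)
    fix y w assume that: "\<bar>y - q\<bar> < d" "w \<in> minimizers y" "u w \<in> S"
    then have "w \<in> K" unfolding K_def minimizers_def by auto
    with d(2) that(1) have "\<tau> q + (y - q) * u w0 < y * u w - v w" by blast
    with that(2) have "\<tau> q + (y - q) * u w0 < \<tau> y" unfolding minimizers_def by auto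
    with tau_le_tangent[OF w0, of y] show False by simp
  qed
  with d(1) show ?thesis by blast
qed

lemma superdiff_minimizer_le:
  assumes "\<alpha> \<in> superdiff \<tau> q"
  shows "\<exists>w\<in>minimizers q. u w \<le> \<alpha>"
proof (rule ccontr)
  assume "\<not> ?thesis"
  then have "u ` minimizers q \<inter> {..\<alpha>} = {}" by fastforce
  then obtain d where d: "d > 0" "\<forall>y w. \<bar>y - q\<bar> < d \<longrightarrow> w \<in> minimizers y \<longrightarrow> u w \<notin> {..\<alpha>}"
    using minimizers_avoid_closed[OF closed_atMost] by blast
  define y where "y = q + d / 2"
  obtain w where w: "w \<in> minimizers y" using minimizers_nonempty by blast
  have "y - q > 0" "\<bar>y - q\<bar> < d" using d(1) y_def by auto
  with d(2) w have "u w \<notin> {..\<alpha>}" by blast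
  with \<open>y - q > 0\<close> have "(y - q) * \<alpha> < (y - q) * u w" by simp
  also have "\<dots> \<le> \<tau> y - \<tau> q" using tau_le_tangent[OF w, of q] by (simp add: algebra_simps)
  also have "\<dots> \<le> \<alpha> * (y - q)" using assms unfolding superdiff_def by (auto simp: algebra_simps)
  finally show False by simp
qed

lemma superdiff_minimizer_ge:
  assumes "\<alpha> \<in> superdiff \<tau> q"
  shows "\<exists>w\<in>minimizers q. \<alpha> \<le> u w"
proof -
  interpret reflected: lower_envelope D "\<lambda>w. - u w" v "\<lambda>p. \<tau> (- p)"
    using compact nonempty usc_v tau_eq
    by unfold_locales (auto intro: continuous_on_minus continuous_u)
  have "\<alpha> * (- y - q) + \<tau> q \<ge> \<tau> (- y)" for y
    using assms unfolding superdiff_def by blast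
  then have "- \<alpha> \<in> superdiff (\<lambda>p. \<tau> (- p)) (- q)"
    unfolding superdiff_def by (simp add: algebra_simps)
  from reflected.superdiff_minimizer_le[OF this]
  show ?thesis unfolding reflected.minimizers_def minimizers_def by auto
qed

lemma superdiff_subset_u_image:
  assumes "connected (minimizers q)"
  shows "superdiff \<tau> q \<subseteq> u ` minimizers q"
proof
  fix \<alpha> assume \<alpha>: "\<alpha> \<in> superdiff \<tau> q"
  have "connected (u ` minimizers q)"
    using connected_continuous_image[OF continuous_on_subset[OF continuous_u] assms]
    unfolding minimizers_def by auto
  with superdiff_minimizer_le[OF \<alpha>] superdiff_minimizer_ge[OF \<alpha>]
  show "\<alpha> \<in> u ` minimizers q" unfolding connected_iff_interval by blast
qed

lemma sup_le_concave_conj: "Sup {ereal (v w) | w. w \<in> D \<and> u w = \<alpha>} \<le> concave_conj \<tau> \<alpha>"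
  unfolding concave_conj_def
proof (intro Sup_least INF_greatest)
  fix z p assume "z \<in> {ereal (v w) | w. w \<in> D \<and> u w = \<alpha>}"
  then obtain w where "w \<in> D" "u w = \<alpha>" "z = ereal (v w)" by blast
  with tau_le[of w p] show "z \<le> ereal (p * \<alpha> - \<tau> p)" by simp
qed

lemma sup_eq_concave_conj:
  assumes "\<alpha> \<in> u ` minimizers q"
  shows "Sup {ereal (v w) | w. w \<in> D \<and> u w = \<alpha>} = concave_conj \<tau> \<alpha>"
proof (rule antisym[OF sup_le_concave_conj])
  obtain w where w: "w \<in> D" "q * \<alpha> - \<tau> q = v w" "u w = \<alpha>"
    using assms unfolding minimizers_def by auto
  have "concave_conj \<tau> \<alpha> \<le> ereal (q * \<alpha> - \<tau> q)"
    unfolding concave_conj_def by (rule INF_lower) simp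
  also have "\<dots> \<le> Sup {ereal (v w) | w. w \<in> D \<and> u w = \<alpha>}"
    by (rule Sup_upper) (use w in auto)
  finally show "concave_conj \<tau> \<alpha> \<le> Sup {ereal (v w) | w. w \<in> D \<and> u w = \<alpha>}" .
qed

lemma has_derivative_unique_minimizer:
  assumes "minimizers q = {w0}"
  shows "(\<tau> has_real_derivative u w0) (at q)"
  unfolding has_field_derivative_iff
proof (rule LIM_I)
  fix e :: real assume "e > 0"
  have "closed {t. e / 2 \<le> \<bar>t - u w0\<bar>}"
    by (intro closed_Collect_le continuous_intros)
  moreover have "u ` minimizers q \<inter> {t. e / 2 \<le> \<bar>t - u w0\<bar>} = {}"
    using assms \<open>e > 0\<close> by auto
  ultimately obtain d where d: "d > 0"
    "\<forall>y w. \<bar>y - q\<bar> < d \<longrightarrow> w \<in> minimizers y \<longrightarrow> u w \<notin> {t. e / 2 \<le> \<bar>t - u w0\<bar>}"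
    by (blast dest: minimizers_avoid_closed)
  have "\<bar>(\<tau> x - \<tau> q) / (x - q) - u w0\<bar> < e" if x: "x \<noteq> q" "\<bar>x - q\<bar> < d" for x
  proof -
    obtain w where w: "w \<in> minimizers x" using minimizers_nonempty by blast
    have "(x - q) * u w \<le> \<tau> x - \<tau> q"
      using tau_le_tangent[OF w, of q] by (simp add: algebra_simps)
    moreover have "\<tau> x - \<tau> q \<le> (x - q) * u w0"
      using tau_le_tangent[of w0 q x] assms by simp
    moreover have "(x - q) * (u w0 - u w) \<le> \<bar>x - q\<bar> * \<bar>u w - u w0\<bar>"
      by (metis abs_ge_self abs_minus_commute abs_mult)
    ultimately have "\<bar>\<tau> x - \<tau> q - (x - q) * u w0\<bar> \<le> \<bar>x - q\<bar> * \<bar>u w - u w0\<bar>"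
      by (simp add: right_diff_distrib)
    also have "\<dots> \<le> \<bar>x - q\<bar> * (e / 2)"
    proof (rule mult_left_mono)
      show "\<bar>u w - u w0\<bar> \<le> e / 2" using d(2) x(2) w by force
    qed simp
    finally have "\<bar>\<tau> x - \<tau> q - (x - q) * u w0\<bar> / \<bar>x - q\<bar> \<le> e / 2"
      using x(1) by (simp add: divide_le_eq mult.commute)
    moreover have "(\<tau> x - \<tau> q) / (x - q) - u w0 = (\<tau> x - \<tau> q - (x - q) * u w0) / (x - q)"
      using x(1) by (simp add: field_simps)
    ultimately show ?thesis using \<open>e > 0\<close> by (simp only: abs_divide)
  qed
  with d(1) show "\<exists>s>0. \<forall>x. x \<noteq> q \<and> norm (x - q) < s \<longrightarrow> norm ((\<tau> x - \<tau> q) / (x - q) - u w0) < e"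
    by auto
qed

end

theorem corollaryc:
  fixes D :: "'a::t2_space set" and u v :: "'a \<Rightarrow> real"
    and f :: "real \<Rightarrow> ereal" and \<tau> :: "real \<Rightarrow> real" and M :: "real \<Rightarrow> 'a set"
    and q :: real
  assumes "compact D" and "D \<noteq> {}"
    and "continuous_on D u"
    and "usc_on D v"
    and "\<And>\<alpha>. f \<alpha> = Sup {ereal (v w) | w. w \<in> D \<and> u w = \<alpha>}"
    and "\<And>q. \<tau> q = Inf {q * u w - v w | w. w \<in> D}"
    and "\<And>q. M q = {w \<in> D. q * u w - v w = \<tau> q}"
    and "connected (M q)"
  shows "(\<forall>\<alpha> \<in> superdiff \<tau> q. f \<alpha> = concave_conj \<tau> \<alpha>)
    \<and> ((\<exists>w. M q = {w}) \<longrightarrow> \<tau> differentiable (at q))"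
proof -
  interpret lower_envelope D u v \<tau>
    using assms(1-4,6) by unfold_locales
  have M: "M = minimizers" using assms(7) unfolding minimizers_def by auto
  have "f \<alpha> = concave_conj \<tau> \<alpha>" if "\<alpha> \<in> superdiff \<tau> q" for \<alpha>
    using superdiff_subset_u_image assms(8) that sup_eq_concave_conj
    unfolding assms(5) M by blast
  moreover have "\<tau> differentiable (at q)" if "M q = {w}" for w
    using has_derivative_unique_minimizer that
    unfolding M real_differentiable_def by blast
  ultimately show ?thesis by blast
qed

end
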